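(* Let $\alpha\in(0,1)$. For all density operators $\varrho,\sigma$ on a finite-dimensional Hilbert space, $\overline{D}_\alpha^{\mathrm{test}}(\varrho\|\sigma)\ge0$, with equality if and only if $\varrho=\sigma$.
   Context: For probability vectors $p,q$ and $\alpha\in(0,1)$, $D_\alpha(p\|q)=\frac{1}{\alpha-1}\log\sum_xp(x)^\alpha q(x)^{1-\alpha}$. A test is an operator $0\le T\le I$; $\mathcal T(X):=(\operatorname{Tr}XT,\operatorname{Tr}X(I-T))$; $D_\alpha^{\mathrm{test}}(\varrho\|\sigma):=\max_{0\le T\le I}D_\alpha(\mathcal T(\varrho)\|\mathcal T(\sigma))$; $\overline{D}_\alpha^{\mathrm{test}}(\varrho\|\sigma):=\limsup_n\frac1nD_\alpha^{\mathrm{test}}(\varrho^{\otimes n}\|\sigma^{\otimes n})$. *)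

theory Defs
  imports "HOL-Analysis.Analysis" "Jordan_Normal_Form.Matrix" "HOL-Library.Extended_Real"
begin

text \<open>Finite-dimensional Hilbert space = C^d; operators are d x d complex matrices.\<close>

definition mtrace :: "complex mat \<Rightarrow> complex" where
  "mtrace A = (\<Sum>i<dim_row A. A $$ (i, i))"

definition hermitian_mat :: "nat \<Rightarrow> complex mat \<Rightarrow> bool" where
  "hermitian_mat d A \<longleftrightarrow> A \<in> carrier_mat d d \<and>
     (\<forall>i<d. \<forall>j<d. A $$ (i, j) = cnj (A $$ (j, i)))"

definition psd_mat :: "nat \<Rightarrow> complex mat \<Rightarrow> bool" where
  "psd_mat d A \<longleftrightarrow> hermitian_mat d A \<and>
     (\<forall>v \<in> carrier_vec d. 0 \<le> Re ((A *\<^sub>v v) \<bullet>c v))"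

definition density_op :: "nat \<Rightarrow> complex mat \<Rightarrow> bool" where
  "density_op d \<rho> \<longleftrightarrow> psd_mat d \<rho> \<and> mtrace \<rho> = 1"

definition test_op :: "nat \<Rightarrow> complex mat \<Rightarrow> bool" where
  "test_op d T \<longleftrightarrow> psd_mat d T \<and> psd_mat d (1\<^sub>m d - T)"

definition kron :: "complex mat \<Rightarrow> complex mat \<Rightarrow> complex mat" where
  "kron A B = mat (dim_row A * dim_row B) (dim_col A * dim_col B)
     (\<lambda>(i, j). A $$ (i div dim_row B, j div dim_col B) * B $$ (i mod dim_row B, j mod dim_col B))"

fun tensor_pow :: "complex mat \<Rightarrow> nat \<Rightarrow> complex mat" where
  "tensor_pow A 0 = 1\<^sub>m 1"
| "tensor_pow A (Suc n) = kron (tensor_pow A n) A"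

text \<open>Classical Renyi divergence of two-point distributions (p1,p2), (q1,q2), alpha in (0,1);
  equals +infinity when the sum vanishes (disjoint supports), following log 0 = -infinity.\<close>
definition renyi2 :: "real \<Rightarrow> real \<times> real \<Rightarrow> real \<times> real \<Rightarrow> ereal" where
  "renyi2 \<alpha> p q =
     (let s = fst p powr \<alpha> * fst q powr (1 - \<alpha>) + snd p powr \<alpha> * snd q powr (1 - \<alpha>)
      in if s = 0 then \<infinity> else ereal (ln s / (\<alpha> - 1)))"

definition test_channel :: "complex mat \<Rightarrow> complex mat \<Rightarrow> real \<times> real" where
  "test_channel T X = (Re (mtrace (X * T)), Re (mtrace (X * (1\<^sub>m (dim_row X) - T))))"

definition D_test :: "real \<Rightarrow> nat \<Rightarrow> complex mat \<Rightarrow> complex mat \<Rightarrow> ereal" where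
  "D_test \<alpha> d \<rho> \<sigma> = (SUP T \<in> {T. test_op d T}. renyi2 \<alpha> (test_channel T \<rho>) (test_channel T \<sigma>))"

definition D_test_reg :: "real \<Rightarrow> nat \<Rightarrow> complex mat \<Rightarrow> complex mat \<Rightarrow> ereal" where
  "D_test_reg \<alpha> d \<rho> \<sigma> =
     limsup (\<lambda>n. D_test \<alpha> (d ^ n) (tensor_pow \<rho> n) (tensor_pow \<sigma> n) / ereal (real n))"

end

theory Submission
  imports Defs
begin

text \<open>The trivial test \<open>T = 0\<close> sends every state to \<open>(0, 1)\<close>, so all terms are nonnegative, and
  equal states give equal two-point distributions, whose divergence is at most \<open>0\<close>. If
  \<open>\<rho> \<noteq> \<sigma>\<close>, some orthonormal basis (a standard one, or one containing \<open>(e\<^sub>i + c e\<^sub>j) / \<surd>2\<close> with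
  \<open>c \<in> {1, \<i>}\<close>) yields outcome distributions \<open>p \<noteq> q\<close>, whose Bhattacharyya coefficient
  \<open>F = \<Sum>\<^sub>l \<surd>(p\<^sub>l q\<^sub>l)\<close> is therefore \<open>< 1\<close>. On \<open>n\<close> copies, measuring in the product basis and
  accepting the outcomes that are at least as likely under \<open>\<rho>\<close> as under \<open>\<sigma>\<close> gives a test
  whose two errors are both at most \<open>F\<^sup>n\<close>. Its divergence grows linearly in \<open>n\<close>, so the
  regularized divergence is positive.\<close>

lemma sum_lessThan_mult_div_mod:
  assumes "0 < (d::nat)"
  shows "(\<Sum>k<N * d. h (k div d) (k mod d)) = (\<Sum>i<N. \<Sum>j<d. h i j)"
proof -
  have "(\<Sum>k<N * d. h (k div d) (k mod d)) = (\<Sum>i<N. \<Sum>k\<in>{i * d..<i * d + d}. h (k div d) (k mod d))"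
    by (simp only: sum.nat_group)
  also have "\<dots> = (\<Sum>i<N. \<Sum>j<d. h i j)"
    using assms by (intro sum.cong[OF refl]) (simp add: sum.atLeastLessThan_shift_0 atLeast0LessThan)
  finally show ?thesis .
qed

lemma sum_lessThan_power_Suc_div_mod:
  assumes "0 < (d::nat)"
  shows "(\<Sum>k<d ^ Suc n. h (k div d) (k mod d)) = (\<Sum>i<d ^ n. \<Sum>j<d. h i j)"
  using sum_lessThan_mult_div_mod[OF assms, where N = "d ^ n" and h = h] by (simp add: mult.commute)

lemma sum_lessThan_two_support:
  assumes "i \<noteq> j" "i < d" "j < (d::nat)" "\<And>a. a < d \<Longrightarrow> a \<noteq> i \<Longrightarrow> a \<noteq> j \<Longrightarrow> g a = 0"
  shows "(\<Sum>a<d. g a) = g i + g j"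
proof -
  have "(\<Sum>a<d. g a) = (\<Sum>a\<in>{i, j}. g a)"
    using assms by (intro sum.mono_neutral_right) auto
  then show ?thesis using assms(1) by simp
qed

section \<open>Quadratic forms and orthonormal bases\<close>

text \<open>Vectors of \<open>\<complex>\<^sup>N\<close> are represented by functions \<open>nat \<Rightarrow> complex\<close>, so that a basis is a
  function of two indices: \<open>u l\<close> is the \<open>l\<close>-th basis vector.\<close>

definition qform :: "nat \<Rightarrow> complex mat \<Rightarrow> (nat \<Rightarrow> complex) \<Rightarrow> complex" where
  "qform N A v = (\<Sum>i<N. \<Sum>j<N. cnj (v i) * A $$ (i, j) * v j)"

lemma qform_eq_cscalar_prod:
  assumes "A \<in> carrier_mat N N" "v \<in> carrier_vec N"
  shows "(A *\<^sub>v v) \<bullet>c v = qform N A (\<lambda>i. v $ i)"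
  using assms unfolding qform_def
  by (auto simp: scalar_prod_def atLeast0LessThan sum_distrib_right sum_distrib_left mult_ac
      intro!: sum.cong)

lemma qform_cong: "(\<And>i. i < N \<Longrightarrow> v i = w i) \<Longrightarrow> qform N A v = qform N A w"
  unfolding qform_def by (auto intro!: sum.cong)

lemma psd_mat_qform_nonneg:
  assumes "psd_mat N A"
  shows "0 \<le> Re (qform N A v)"
proof -
  have "0 \<le> Re ((A *\<^sub>v vec N v) \<bullet>c vec N v)" using assms unfolding psd_mat_def by auto
  also have "(A *\<^sub>v vec N v) \<bullet>c vec N v = qform N A v"
    using assms by (subst qform_eq_cscalar_prod[of _ N])
      (auto simp: psd_mat_def hermitian_mat_def intro!: qform_cong)
  finally show ?thesis .
qed

lemma psd_mat_qformI:
  assumes herm: "hermitian_mat N A" and nonneg: "\<And>v. 0 \<le> Re (qform N A v)"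
  shows "psd_mat N A"
  unfolding psd_mat_def
proof (intro conjI ballI herm)
  have A: "A \<in> carrier_mat N N" using herm unfolding hermitian_mat_def by simp
  fix v :: "complex vec" assume "v \<in> carrier_vec N"
  then show "0 \<le> Re ((A *\<^sub>v v) \<bullet>c v)" using qform_eq_cscalar_prod[OF A] nonneg by simp
qed

lemma hermitian_mat_qform_real:
  assumes "hermitian_mat N A"
  shows "qform N A v = of_real (Re (qform N A v))"
proof -
  have herm: "cnj (A $$ (i, j)) = A $$ (j, i)" if "i < N" "j < N" for i j
    using assms that unfolding hermitian_mat_def by (metis complex_cnj_cnj)
  have "cnj (qform N A v) = (\<Sum>i<N. \<Sum>j<N. v i * A $$ (j, i) * cnj (v j))"
    unfolding qform_def by (simp add: herm)
  also have "\<dots> = qform N A v"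
    unfolding qform_def by (subst sum.swap) (auto simp: mult_ac intro!: sum.cong)
  finally have "Im (qform N A v) = 0" by (metis cnj.sel(2) neg_equal_zero)
  then show ?thesis by (simp add: complex_eq_iff)
qed

text \<open>The completeness relation \<open>\<Sum>\<^sub>l |u\<^sub>l\<rangle>\<langle>u\<^sub>l| = I\<close>; for \<open>N\<close> vectors in \<open>\<complex>\<^sup>N\<close> it says that
  \<open>u\<^sub>0, \<dots>, u\<^sub>N\<^sub>-\<^sub>1\<close> is an orthonormal basis.\<close>

definition resolves_identity :: "nat \<Rightarrow> (nat \<Rightarrow> nat \<Rightarrow> complex) \<Rightarrow> bool" where
  "resolves_identity N u \<longleftrightarrow>
     (\<forall>i<N. \<forall>j<N. (\<Sum>l<N. u l i * cnj (u l j)) = (if i = j then 1 else 0))"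

definition std_basis :: "nat \<Rightarrow> nat \<Rightarrow> complex" where
  "std_basis l a = (if l = a then 1 else 0)"

definition rot_basis :: "complex \<Rightarrow> nat \<Rightarrow> nat \<Rightarrow> nat \<Rightarrow> nat \<Rightarrow> complex" where
  "rot_basis c i j l a =
     (if l = i then (if a = i then 1 else if a = j then c else 0) / complex_of_real (sqrt 2)
      else if l = j then (if a = i then 1 else if a = j then - c else 0) / complex_of_real (sqrt 2)
      else if l = a then 1 else 0)"

lemma resolves_identity_std_basis: "resolves_identity d std_basis"
  unfolding resolves_identity_def std_basis_def
  by (simp add: if_distrib[of cnj] if_distrib[of "\<lambda>x. x * _"] cong: if_cong)

lemma qform_std_basis:
  assumes "l < d"
  shows "qform d A (std_basis l) = A $$ (l, l)"
  using assms unfolding qform_def std_basis_def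
  by (simp add: if_distrib[of cnj] if_distrib[of "\<lambda>x. x * _"] if_distrib[of "\<lambda>x. _ * x"] cong: if_cong)

lemma resolves_identity_rot_basis:
  assumes ij: "i \<noteq> j" "i < d" "j < d" and c: "c * cnj c = 1"
  shows "resolves_identity d (rot_basis c i j)"
  unfolding resolves_identity_def
proof (intro allI impI)
  fix a b assume ab: "a < d" "b < d"
  let ?u = "rot_basis c i j" and ?t = "complex_of_real (sqrt 2)"
  have t: "?t * ?t = 2" by (simp flip: of_real_mult)
  have rest: "(\<Sum>l\<in>{..<d} - {i, j}. ?u l a * cnj (?u l b))
      = (\<Sum>l\<in>{..<d} - {i, j}. if l = a then (if a = b then 1 else 0) else 0)"
    by (intro sum.cong refl) (auto simp: rot_basis_def)
  have "(\<Sum>l<d. ?u l a * cnj (?u l b))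
      = ?u i a * cnj (?u i b) + ?u j a * cnj (?u j b) + (\<Sum>l\<in>{..<d} - {i, j}. ?u l a * cnj (?u l b))"
    using ij by (subst sum.subset_diff[of "{i, j}"]) (auto simp: add.commute)
  also have "\<dots> = ?u i a * cnj (?u i b) + ?u j a * cnj (?u j b)
      + (if a = b \<and> a < d \<and> a \<noteq> i \<and> a \<noteq> j then 1 else 0)"
    unfolding rest by (subst sum.delta) auto
  also have "\<dots> = (if a = b then 1 else 0)"
    using ij c t ab by (auto simp: rot_basis_def field_simps)
  finally show "(\<Sum>l<d. ?u l a * cnj (?u l b)) = (if a = b then 1 else 0)" .
qed

lemma qform_rot_basis:
  assumes ij: "i \<noteq> j" "i < d" "j < d" and c: "c * cnj c = 1"
  shows "qform d A (rot_basis c i j i)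
    = (A $$ (i, i) + c * A $$ (i, j) + cnj c * A $$ (j, i) + A $$ (j, j)) / 2"
proof -
  let ?u = "rot_basis c i j i" and ?t = "complex_of_real (sqrt 2)"
  have t: "?t * ?t = 2" by (simp flip: of_real_mult)
  have "qform d A ?u = (\<Sum>a<d. cnj (?u a) * A $$ (a, i) * ?u i + cnj (?u a) * A $$ (a, j) * ?u j)"
    unfolding qform_def
    by (intro sum.cong refl sum_lessThan_two_support[OF ij]) (auto simp: rot_basis_def)
  also have "\<dots> = (cnj (?u i) * A $$ (i, i) * ?u i + cnj (?u i) * A $$ (i, j) * ?u j)
      + (cnj (?u j) * A $$ (j, i) * ?u i + cnj (?u j) * A $$ (j, j) * ?u j)"
    by (rule sum_lessThan_two_support[OF ij]) (auto simp: rot_basis_def)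
  also have "\<dots> = (A $$ (i, i) + c * A $$ (i, j) + cnj c * A $$ (j, i) + A $$ (j, j)) / 2"
    using ij c t by (simp add: rot_basis_def field_simps)
  finally show ?thesis .
qed

lemma exists_basis_qform_ne:
  assumes h\<rho>: "hermitian_mat d \<rho>" and h\<sigma>: "hermitian_mat d \<sigma>" and "\<rho> \<noteq> \<sigma>"
  shows "\<exists>u. resolves_identity d u \<and> (\<exists>l<d. qform d \<rho> (u l) \<noteq> qform d \<sigma> (u l))"
proof -
  have "\<rho> \<in> carrier_mat d d" "\<sigma> \<in> carrier_mat d d"
    using h\<rho> h\<sigma> unfolding hermitian_mat_def by simp_all
  then obtain i j where ij: "i < d" "j < d" "\<rho> $$ (i, j) \<noteq> \<sigma> $$ (i, j)"
    using \<open>\<rho> \<noteq> \<sigma>\<close> eq_matI[of \<sigma> \<rho>] by fastforce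
  show ?thesis
  proof (cases "\<exists>l<d. \<rho> $$ (l, l) \<noteq> \<sigma> $$ (l, l)")
    case True
    then show ?thesis
      by (intro exI[of _ std_basis]) (auto simp: resolves_identity_std_basis qform_std_basis)
  next
    case False
    then have diag: "\<rho> $$ (i, i) = \<sigma> $$ (i, i)" "\<rho> $$ (j, j) = \<sigma> $$ (j, j)" using ij by auto
    with ij have "i \<noteq> j" by auto
    have herm: "\<rho> $$ (j, i) = cnj (\<rho> $$ (i, j))" "\<sigma> $$ (j, i) = cnj (\<sigma> $$ (i, j))"
      using h\<rho> h\<sigma> ij unfolding hermitian_mat_def by blast+
    define \<Delta> where "\<Delta> = \<rho> $$ (i, j) - \<sigma> $$ (i, j)"
    have "Re (1 * \<Delta>) \<noteq> 0 \<or> Re (\<i> * \<Delta>) \<noteq> 0"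
      using ij(3) by (auto simp: \<Delta>_def complex_eq_iff)
    then obtain c where "c \<in> {1, \<i>}" and c: "Re (c * \<Delta>) \<noteq> 0" by blast
    then have unit: "c * cnj c = 1" by auto
    have "qform d \<rho> (rot_basis c i j i) - qform d \<sigma> (rot_basis c i j i) = (c * \<Delta> + cnj (c * \<Delta>)) / 2"
      unfolding qform_rot_basis[OF \<open>i \<noteq> j\<close> ij(1,2) unit] herm diag \<Delta>_def
      by (simp add: diff_divide_distrib[symmetric] algebra_simps)
    also have "\<dots> = of_real (Re (c * \<Delta>))" by (simp only: complex_add_cnj) simp
    finally have "qform d \<rho> (rot_basis c i j i) - qform d \<sigma> (rot_basis c i j i) \<noteq> 0"
      using c by (simp only: of_real_eq_0_iff not_False_eq_True)
    then show ?thesis using resolves_identity_rot_basis[OF \<open>i \<noteq> j\<close> ij(1,2) unit] ij(1) by auto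
  qed
qed

text \<open>The product basis of \<open>(\<complex>\<^sup>d)\<^sup>\<otimes>\<^sup>n\<close>, indexed compatibly with \<^const>\<open>kron\<close>: the last tensor
  factor carries the least significant base-\<open>d\<close> digit.\<close>

fun tensor_basis :: "nat \<Rightarrow> (nat \<Rightarrow> nat \<Rightarrow> complex) \<Rightarrow> nat \<Rightarrow> nat \<Rightarrow> nat \<Rightarrow> complex" where
  "tensor_basis d u 0 k i = 1"
| "tensor_basis d u (Suc n) k i = tensor_basis d u n (k div d) (i div d) * u (k mod d) (i mod d)"

lemma resolves_identity_tensor_basis:
  assumes d: "0 < d" and u: "resolves_identity d u"
  shows "resolves_identity (d ^ n) (tensor_basis d u n)"
proof (induction n)
  case 0
  then show ?case by (simp add: resolves_identity_def)
next
  case (Suc n)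
  show ?case unfolding resolves_identity_def
  proof (intro allI impI)
    fix i j assume "i < d ^ Suc n" "j < d ^ Suc n"
    then have div: "i div d < d ^ n" "j div d < d ^ n" and mod: "i mod d < d" "j mod d < d"
      using d by (auto simp: less_mult_imp_div_less mult.commute)
    let ?w = "tensor_basis d u n"
    have "(\<Sum>l<d ^ Suc n. tensor_basis d u (Suc n) l i * cnj (tensor_basis d u (Suc n) l j))
       = (\<Sum>a<d ^ n. \<Sum>b<d. ?w a (i div d) * cnj (?w a (j div d)) * (u b (i mod d) * cnj (u b (j mod d))))"
      by (subst sum_lessThan_power_Suc_div_mod[OF d, symmetric]) (simp add: mult_ac)
    also have "\<dots> = (\<Sum>a<d ^ n. ?w a (i div d) * cnj (?w a (j div d)))
        * (\<Sum>b<d. u b (i mod d) * cnj (u b (j mod d)))"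
      by (simp add: sum_product)
    also have "\<dots> = (if i div d = j div d \<and> i mod d = j mod d then 1 else 0)"
      using Suc u div mod unfolding resolves_identity_def by simp
    also have "\<dots> = (if i = j then 1 else 0)" by (metis div_mult_mod_eq)
    finally show "(\<Sum>l<d ^ Suc n. tensor_basis d u (Suc n) l i * cnj (tensor_basis d u (Suc n) l j))
      = (if i = j then 1 else 0)" .
  qed
qed

section \<open>Tests built from a basis\<close>

definition proj_sum :: "nat \<Rightarrow> (nat \<Rightarrow> nat \<Rightarrow> complex) \<Rightarrow> nat set \<Rightarrow> complex mat" where
  "proj_sum N w A = mat N N (\<lambda>(i, j). \<Sum>k\<in>A. w k i * cnj (w k j))"

lemma proj_sum_carrier: "proj_sum N w A \<in> carrier_mat N N"
  by (simp add: proj_sum_def)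

lemma hermitian_mat_proj_sum: "hermitian_mat N (proj_sum N w A)"
  unfolding hermitian_mat_def proj_sum_def by (auto simp: mult.commute)

lemma qform_proj_sum:
  assumes "finite A"
  shows "qform N (proj_sum N w A) v = (\<Sum>k\<in>A. of_real ((cmod (\<Sum>j<N. cnj (w k j) * v j))\<^sup>2))"
proof -
  have "qform N (proj_sum N w A) v = (\<Sum>i<N. \<Sum>j<N. \<Sum>k\<in>A. cnj (v i) * w k i * (cnj (w k j) * v j))"
    unfolding qform_def proj_sum_def
    by (intro sum.cong refl) (simp add: sum_distrib_left sum_distrib_right mult_ac)
  also have "\<dots> = (\<Sum>k\<in>A. (\<Sum>i<N. cnj (v i) * w k i) * (\<Sum>j<N. cnj (w k j) * v j))"
    by (simp add: sum.swap[of _ A] sum_product)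
  also have "\<dots> = (\<Sum>k\<in>A. cnj (\<Sum>j<N. cnj (w k j) * v j) * (\<Sum>j<N. cnj (w k j) * v j))"
    by (simp add: mult.commute)
  also have "\<dots> = (\<Sum>k\<in>A. of_real ((cmod (\<Sum>j<N. cnj (w k j) * v j))\<^sup>2))"
    by (rule sum.cong[OF refl]) (metis complex_norm_square mult.commute of_real_power)
  finally show ?thesis .
qed

lemma psd_mat_proj_sum: "finite A \<Longrightarrow> psd_mat N (proj_sum N w A)"
  by (rule psd_mat_qformI[OF hermitian_mat_proj_sum]) (simp add: qform_proj_sum sum_nonneg)

lemma one_minus_proj_sum:
  assumes "resolves_identity N w" "A \<subseteq> {..<N}"
  shows "1\<^sub>m N - proj_sum N w A = proj_sum N w ({..<N} - A)"
proof (rule eq_matI)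
  fix i j assume "i < dim_row (proj_sum N w ({..<N} - A))" "j < dim_col (proj_sum N w ({..<N} - A))"
  then have "i < N" "j < N" by (auto simp: proj_sum_def)
  moreover have "(\<Sum>k\<in>{..<N} - A. w k i * cnj (w k j))
      = (\<Sum>k<N. w k i * cnj (w k j)) - (\<Sum>k\<in>A. w k i * cnj (w k j))"
    using assms(2) finite_subset by (subst sum_diff) auto
  ultimately show "(1\<^sub>m N - proj_sum N w A) $$ (i, j) = proj_sum N w ({..<N} - A) $$ (i, j)"
    using assms(1) unfolding proj_sum_def resolves_identity_def by simp
qed (auto simp: proj_sum_def)

lemma test_op_proj_sum:
  assumes "resolves_identity N w" "A \<subseteq> {..<N}"
  shows "test_op N (proj_sum N w A)"
  unfolding test_op_def one_minus_proj_sum[OF assms]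
  using assms(2) by (auto intro!: psd_mat_proj_sum finite_subset[of A "{..<N}"])

lemma mtrace_mult:
  assumes "X \<in> carrier_mat N N" "T \<in> carrier_mat N N"
  shows "mtrace (X * T) = (\<Sum>i<N. \<Sum>j<N. X $$ (i, j) * T $$ (j, i))"
  using assms unfolding mtrace_def by (auto simp: scalar_prod_def atLeast0LessThan intro!: sum.cong)

lemma mtrace_mult_proj_sum:
  assumes "X \<in> carrier_mat N N" "finite A"
  shows "mtrace (X * proj_sum N w A) = (\<Sum>k\<in>A. qform N X (w k))"
  unfolding mtrace_mult[OF assms(1) proj_sum_carrier] qform_def
  by (subst sum.swap, subst (2) sum.swap)
    (intro sum.cong refl, simp add: proj_sum_def sum_distrib_left mult_ac)

lemma mtrace_mult_add_mult_one_minus: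
  assumes "X \<in> carrier_mat N N" "T \<in> carrier_mat N N"
  shows "mtrace (X * T) + mtrace (X * (1\<^sub>m N - T)) = mtrace X"
proof -
  have "mtrace (X * T) + mtrace (X * (1\<^sub>m N - T))
      = (\<Sum>i<N. \<Sum>j<N. X $$ (i, j) * (if j = i then 1 else 0))"
    unfolding mtrace_mult[OF assms] mtrace_mult[OF assms(1) minus_carrier_mat[OF assms(2)]]
      sum.distrib[symmetric]
    using assms by (intro sum.cong refl) (auto simp: algebra_simps)
  also have "\<dots> = mtrace X"
    using assms unfolding mtrace_def by (simp add: if_distrib cong: if_cong)
  finally show ?thesis .
qed

lemma sum_qform_resolves_identity:
  assumes "resolves_identity N u" "X \<in> carrier_mat N N"
  shows "(\<Sum>l<N. qform N X (u l)) = mtrace X"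
proof -
  have "(\<Sum>l<N. qform N X (u l)) = (\<Sum>i<N. \<Sum>j<N. X $$ (i, j) * (\<Sum>l<N. u l j * cnj (u l i)))"
    unfolding qform_def sum_distrib_left
    by (subst sum.swap, subst (2) sum.swap) (intro sum.cong refl, simp add: mult_ac)
  also have "\<dots> = (\<Sum>i<N. \<Sum>j<N. X $$ (i, j) * (if j = i then 1 else 0))"
    using assms(1) unfolding resolves_identity_def by (intro sum.cong refl) simp
  also have "\<dots> = mtrace X"
    using assms(2) unfolding mtrace_def by (simp add: if_distrib cong: if_cong)
  finally show ?thesis .
qed

lemma density_op_hermitian: "density_op d \<rho> \<Longrightarrow> hermitian_mat d \<rho>"
  unfolding density_op_def psd_mat_def by simp

lemma density_op_carrier: "density_op d \<rho> \<Longrightarrow> \<rho> \<in> carrier_mat d d"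
  using density_op_hermitian unfolding hermitian_mat_def by blast

lemma density_op_dim_pos:
  assumes "density_op d \<rho>"
  shows "0 < d"
proof (rule Nat.gr0I)
  assume "d = 0"
  then have "mtrace \<rho> = 0" using density_op_carrier[OF assms] by (simp add: mtrace_def)
  then show False using assms by (simp add: density_op_def)
qed

lemma tensor_pow_carrier: "\<rho> \<in> carrier_mat d d \<Longrightarrow> tensor_pow \<rho> n \<in> carrier_mat (d ^ n) (d ^ n)"
  by (induction n) (auto simp: kron_def mult.commute)

lemma tensor_pow_Suc_index:
  assumes "\<rho> \<in> carrier_mat d d" "i < d ^ Suc n" "j < d ^ Suc n"
  shows "tensor_pow \<rho> (Suc n) $$ (i, j) = tensor_pow \<rho> n $$ (i div d, j div d) * \<rho> $$ (i mod d, j mod d)"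
  using assms tensor_pow_carrier[OF assms(1), of n] by (simp add: kron_def mult.commute)

lemma mtrace_tensor_pow:
  assumes "\<rho> \<in> carrier_mat d d" "0 < d"
  shows "mtrace (tensor_pow \<rho> n) = mtrace \<rho> ^ n"
proof (induction n)
  case 0
  then show ?case by (simp add: mtrace_def)
next
  case (Suc n)
  have "mtrace (tensor_pow \<rho> (Suc n))
      = (\<Sum>i<d ^ Suc n. tensor_pow \<rho> n $$ (i div d, i div d) * \<rho> $$ (i mod d, i mod d))"
    unfolding mtrace_def using tensor_pow_carrier[OF assms(1), of "Suc n"]
    by (intro sum.cong)
      (auto simp: tensor_pow_Suc_index[OF assms(1)] simp del: power_Suc tensor_pow.simps)
  also have "\<dots> = mtrace (tensor_pow \<rho> n) * mtrace \<rho>"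
    unfolding sum_lessThan_power_Suc_div_mod[OF assms(2),
        where h = "\<lambda>a b. tensor_pow \<rho> n $$ (a, a) * \<rho> $$ (b, b)"] mtrace_def
    using tensor_pow_carrier[OF assms(1), of n] assms(1) by (simp add: sum_product)
  finally show ?case using Suc by simp
qed

lemma mtrace_tensor_pow_density_op:
  assumes "density_op d \<rho>"
  shows "mtrace (tensor_pow \<rho> n) = 1"
  using mtrace_tensor_pow[OF density_op_carrier[OF assms] density_op_dim_pos[OF assms]] assms
  by (simp add: density_op_def)

lemma qform_tensor_pow_Suc:
  assumes "\<rho> \<in> carrier_mat d d" "0 < d"
  shows "qform (d ^ Suc n) (tensor_pow \<rho> (Suc n)) (tensor_basis d u (Suc n) k)
       = qform (d ^ n) (tensor_pow \<rho> n) (tensor_basis d u n (k div d)) * qform d \<rho> (u (k mod d))"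
proof -
  let ?X = "tensor_pow \<rho> n" and ?w = "tensor_basis d u n (k div d)" and ?u = "u (k mod d)"
  let ?F = "\<lambda>i1 i2 j1 j2. (cnj (?w i1) * ?X $$ (i1, j1) * ?w j1) * (cnj (?u i2) * \<rho> $$ (i2, j2) * ?u j2)"
  have "qform (d ^ Suc n) (tensor_pow \<rho> (Suc n)) (tensor_basis d u (Suc n) k)
      = (\<Sum>i<d ^ Suc n. \<Sum>j<d ^ Suc n. ?F (i div d) (i mod d) (j div d) (j mod d))"
    unfolding qform_def
    by (intro sum.cong refl)
      (simp add: tensor_pow_Suc_index[OF assms(1)] mult_ac del: power_Suc tensor_pow.simps)
  also have "\<dots> = (\<Sum>i<d ^ Suc n. \<Sum>j1<d ^ n. \<Sum>j2<d. ?F (i div d) (i mod d) j1 j2)"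
    by (intro sum.cong refl sum_lessThan_power_Suc_div_mod[OF assms(2)])
  also have "\<dots> = (\<Sum>i1<d ^ n. \<Sum>i2<d. \<Sum>j1<d ^ n. \<Sum>j2<d. ?F i1 i2 j1 j2)"
    by (rule sum_lessThan_power_Suc_div_mod[OF assms(2),
        where h = "\<lambda>i1 i2. \<Sum>j1<d ^ n. \<Sum>j2<d. ?F i1 i2 j1 j2"])
  also have "\<dots> = qform (d ^ n) ?X ?w * qform d \<rho> ?u"
    unfolding qform_def by (simp add: sum_product)
  finally show ?thesis .
qed

section \<open>Measurement in a basis\<close>

definition outcome_prob :: "nat \<Rightarrow> complex mat \<Rightarrow> (nat \<Rightarrow> nat \<Rightarrow> complex) \<Rightarrow> nat \<Rightarrow> real" where
  "outcome_prob d \<rho> u l = Re (qform d \<rho> (u l))"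

fun prod_dist :: "nat \<Rightarrow> (nat \<Rightarrow> real) \<Rightarrow> nat \<Rightarrow> nat \<Rightarrow> real" where
  "prod_dist d p 0 k = 1"
| "prod_dist d p (Suc n) k = prod_dist d p n (k div d) * p (k mod d)"

lemma outcome_prob_nonneg: "psd_mat d \<rho> \<Longrightarrow> 0 \<le> outcome_prob d \<rho> u l"
  unfolding outcome_prob_def by (rule psd_mat_qform_nonneg)

lemma qform_eq_outcome_prob: "hermitian_mat d \<rho> \<Longrightarrow> qform d \<rho> (u l) = of_real (outcome_prob d \<rho> u l)"
  unfolding outcome_prob_def by (rule hermitian_mat_qform_real)

lemma sum_outcome_prob:
  assumes "resolves_identity d u" "density_op d \<rho>"
  shows "(\<Sum>l<d. outcome_prob d \<rho> u l) = 1"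
  using sum_qform_resolves_identity[OF assms(1), of \<rho>] assms(2)
  unfolding outcome_prob_def density_op_def psd_mat_def hermitian_mat_def by (simp flip: Re_sum)

lemma sum_prod_dist:
  assumes "0 < d"
  shows "(\<Sum>k<d ^ n. prod_dist d p n k) = (\<Sum>l<d. p l) ^ n"
proof (induction n)
  case (Suc n)
  have "(\<Sum>k<d ^ Suc n. prod_dist d p n (k div d) * p (k mod d)) = (\<Sum>l<d. p l) ^ Suc n"
    unfolding sum_lessThan_power_Suc_div_mod[OF assms, where h = "\<lambda>a b. prod_dist d p n a * p b"]
    using Suc by (simp add: sum_product[symmetric] power_Suc2 del: power_Suc)
  then show ?case by simp
qed simp

lemma prod_dist_nonneg: "(\<And>l. 0 \<le> p l) \<Longrightarrow> 0 \<le> prod_dist d p n k"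
  by (induction n arbitrary: k) auto

lemma prod_dist_sqrt_mult:
  "prod_dist d (\<lambda>l. sqrt (p l * q l)) n k = sqrt (prod_dist d p n k * prod_dist d q n k)"
  by (induction n arbitrary: k) (auto simp: real_sqrt_mult mult_ac)

lemma qform_tensor_pow_tensor_basis:
  assumes "hermitian_mat d \<rho>" "0 < d"
  shows "qform (d ^ n) (tensor_pow \<rho> n) (tensor_basis d u n k) = of_real (prod_dist d (outcome_prob d \<rho> u) n k)"
proof (induction n arbitrary: k)
  case 0
  then show ?case by (simp add: qform_def)
next
  case (Suc n)
  have "\<rho> \<in> carrier_mat d d" using assms(1) by (simp add: hermitian_mat_def)
  then have "qform (d ^ Suc n) (tensor_pow \<rho> (Suc n)) (tensor_basis d u (Suc n) k)
      = qform (d ^ n) (tensor_pow \<rho> n) (tensor_basis d u n (k div d)) * qform d \<rho> (u (k mod d))"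
    by (rule qform_tensor_pow_Suc[OF _ assms(2)])
  also have "\<dots> = of_real (prod_dist d (outcome_prob d \<rho> u) n (k div d) * outcome_prob d \<rho> u (k mod d))"
    by (simp add: Suc qform_eq_outcome_prob[OF assms(1)])
  finally show ?case by (simp only: prod_dist.simps)
qed

lemma test_channel_proj_sum_tensor_pow:
  assumes "0 < d" "resolves_identity d u" "hermitian_mat d \<rho>" "A \<subseteq> {..<d ^ n}"
  shows "test_channel (proj_sum (d ^ n) (tensor_basis d u n) A) (tensor_pow \<rho> n)
       = (\<Sum>k\<in>A. prod_dist d (outcome_prob d \<rho> u) n k,
          \<Sum>k\<in>{..<d ^ n} - A. prod_dist d (outcome_prob d \<rho> u) n k)"
proof -
  have X: "tensor_pow \<rho> n \<in> carrier_mat (d ^ n) (d ^ n)"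
    using assms(3) by (simp add: hermitian_mat_def tensor_pow_carrier)
  then have "dim_row (tensor_pow \<rho> n) = d ^ n" by simp
  moreover have "finite A" using assms(4) finite_subset by blast
  ultimately show ?thesis
    unfolding test_channel_def \<open>dim_row (tensor_pow \<rho> n) = d ^ n\<close>
      one_minus_proj_sum[OF resolves_identity_tensor_basis[OF assms(1,2)] assms(4)]
    using X by (simp add: mtrace_mult_proj_sum qform_tensor_pow_tensor_basis[OF assms(3,1)])
qed

section \<open>Two-point Renyi divergences\<close>

lemma sqrt_mult_less_avg:
  fixes x y :: real
  assumes "0 \<le> x" "0 \<le> y" "x \<noteq> y"
  shows "sqrt (x * y) < (x + y) / 2"
proof -
  have "sqrt (x * y) \<noteq> (x + y) / 2"
  proof
    assume "sqrt (x * y) = (x + y) / 2"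
    then have "x * y = ((x + y) / 2)\<^sup>2" using assms by (metis mult_nonneg_nonneg real_sqrt_pow2)
    then have "(x - y)\<^sup>2 = 0" by (simp add: power2_eq_square field_simps)
    then show False using assms by simp
  qed
  then show ?thesis using arith_geo_mean_sqrt[OF assms(1,2)] by simp
qed

lemma min_le_sqrt_mult:
  fixes x y :: real
  assumes "0 \<le> x" "0 \<le> y"
  shows "min x y \<le> sqrt (x * y)"
proof -
  have "min x y * min x y \<le> x * y" using assms by (intro mult_mono) auto
  then have "sqrt (min x y * min x y) \<le> sqrt (x * y)" by (rule real_sqrt_le_mono)
  then show ?thesis using assms by simp
qed

lemma sum_sqrt_mult_less_one:
  fixes p q :: "'a \<Rightarrow> real"
  assumes "finite S" "\<And>l. 0 \<le> p l" "\<And>l. 0 \<le> q l" "sum p S = 1" "sum q S = 1"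
    and "l0 \<in> S" "p l0 \<noteq> q l0"
  shows "(\<Sum>l\<in>S. sqrt (p l * q l)) < 1"
proof -
  have "(\<Sum>l\<in>S. sqrt (p l * q l)) < (\<Sum>l\<in>S. (p l + q l) / 2)"
    using assms arith_geo_mean_sqrt sqrt_mult_less_avg[OF assms(2,3,7)]
    by (intro sum_strict_mono_ex1) auto
  also have "\<dots> = 1" using assms(4,5) by (simp add: sum_divide_distrib[symmetric] sum.distrib)
  finally show ?thesis .
qed

text \<open>The errors of the likelihood-ratio test \<open>{k. Q k \<le> P k}\<close> are bounded by the
  Bhattacharyya coefficient, because each of them is a partial sum of \<open>min (P k) (Q k)\<close>.\<close>

lemma likelihood_test_errors_le:
  fixes P Q :: "'a \<Rightarrow> real"
  assumes "finite S" "\<And>k. 0 \<le> P k" "\<And>k. 0 \<le> Q k"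
  shows "(\<Sum>k\<in>{k\<in>S. Q k \<le> P k}. Q k) \<le> (\<Sum>k\<in>S. sqrt (P k * Q k))"
    and "(\<Sum>k\<in>S - {k\<in>S. Q k \<le> P k}. P k) \<le> (\<Sum>k\<in>S. sqrt (P k * Q k))"
proof -
  have "(\<Sum>k\<in>S. min (P k) (Q k)) \<le> (\<Sum>k\<in>S. sqrt (P k * Q k))"
    using assms by (intro sum_mono min_le_sqrt_mult)
  moreover have "(\<Sum>k\<in>{k\<in>S. Q k \<le> P k}. Q k) = (\<Sum>k\<in>{k\<in>S. Q k \<le> P k}. min (P k) (Q k))"
    by (intro sum.cong) auto
  moreover have "(\<Sum>k\<in>S - {k\<in>S. Q k \<le> P k}. P k) = (\<Sum>k\<in>S - {k\<in>S. Q k \<le> P k}. min (P k) (Q k))"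
    by (intro sum.cong) auto
  moreover have "(\<Sum>k\<in>T. min (P k) (Q k)) \<le> (\<Sum>k\<in>S. min (P k) (Q k))" if "T \<subseteq> S" for T
    using assms that by (intro sum_mono2) auto
  ultimately show "(\<Sum>k\<in>{k\<in>S. Q k \<le> P k}. Q k) \<le> (\<Sum>k\<in>S. sqrt (P k * Q k))"
    and "(\<Sum>k\<in>S - {k\<in>S. Q k \<le> P k}. P k) \<le> (\<Sum>k\<in>S. sqrt (P k * Q k))"
    by (metis (no_types, lifting) Diff_subset mem_Collect_eq order_trans subsetI)+
qed

lemma renyi2_ge_of_errors_le:
  assumes \<alpha>: "0 < \<alpha>" "\<alpha> < 1" and \<epsilon>: "0 < \<epsilon>" "\<epsilon> \<le> 1"
    and a: "0 \<le> a" "a \<le> 1" "0 \<le> a'" "a' \<le> \<epsilon>"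
    and b: "0 \<le> b" "b \<le> \<epsilon>" "0 \<le> b'" "b' \<le> 1"
  shows "ereal ((min \<alpha> (1 - \<alpha>) * - ln \<epsilon> - ln 2) / (1 - \<alpha>)) \<le> renyi2 \<alpha> (a, a') (b, b')"
proof -
  define m where "m = min \<alpha> (1 - \<alpha>)"
  define s where "s = a powr \<alpha> * b powr (1 - \<alpha>) + a' powr \<alpha> * b' powr (1 - \<alpha>)"
  have "a powr \<alpha> * b powr (1 - \<alpha>) \<le> b powr (1 - \<alpha>)"
    using a \<alpha> by (intro mult_left_le_one_le powr_le1) auto
  also have "\<dots> \<le> \<epsilon> powr (1 - \<alpha>)" using b \<alpha> by (intro powr_mono2) auto
  also have "\<dots> \<le> \<epsilon> powr m" using \<epsilon> by (intro powr_mono') (auto simp: m_def)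
  finally have first: "a powr \<alpha> * b powr (1 - \<alpha>) \<le> \<epsilon> powr m" .
  have "a' powr \<alpha> * b' powr (1 - \<alpha>) \<le> a' powr \<alpha>"
    using b \<alpha> by (intro mult_right_le_one_le powr_le1) auto
  also have "\<dots> \<le> \<epsilon> powr \<alpha>" using a \<alpha> by (intro powr_mono2) auto
  also have "\<dots> \<le> \<epsilon> powr m" using \<epsilon> by (intro powr_mono') (auto simp: m_def)
  finally have second: "a' powr \<alpha> * b' powr (1 - \<alpha>) \<le> \<epsilon> powr m" .
  show ?thesis
  proof (cases "s = 0")
    case True
    then show ?thesis unfolding renyi2_def s_def by simp
  next
    case False
    then have "0 < s" unfolding s_def by (simp add: add_nonneg_nonneg order_less_le)
    then have "ln s \<le> ln (2 * \<epsilon> powr m)" using first second \<epsilon> unfolding s_def by simp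
    also have "\<dots> = ln 2 + m * ln \<epsilon>" using \<epsilon> by (simp add: ln_mult ln_powr)
    finally have "ln s \<le> ln 2 + m * ln \<epsilon>" .
    then have "- (ln 2 + m * ln \<epsilon>) / (1 - \<alpha>) \<le> - ln s / (1 - \<alpha>)"
      using \<alpha> by (intro divide_right_mono) auto
    then have "(m * - ln \<epsilon> - ln 2) / (1 - \<alpha>) \<le> ln s / (\<alpha> - 1)"
      using \<alpha> by (simp add: field_simps)
    then show ?thesis unfolding renyi2_def Let_def using False by (simp add: s_def m_def)
  qed
qed

text \<open>For \<open>x < 0\<close> the value \<open>x powr 1 = exp (ln x)\<close> is a positive junk value, so only the
  inequality holds; it spares \<open>renyi2_self_le_zero\<close> a sign hypothesis.\<close>

lemma le_powr_one: "x \<le> (x::real) powr 1"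
  by (cases "x > 0") (auto simp: powr_def intro: order_trans[of _ 0] less_imp_le)

lemma renyi2_self_le_zero:
  assumes "\<alpha> < 1" "x + y = 1"
  shows "renyi2 \<alpha> (x, y) (x, y) \<le> 0"
proof -
  have powr_1: "z powr \<alpha> * z powr (1 - \<alpha>) = z powr 1" for z :: real
    by (simp flip: powr_add)
  define s where "s = x powr 1 + y powr 1"
  have s: "1 \<le> s" unfolding s_def using le_powr_one[of x] le_powr_one[of y] assms(2) by linarith
  then have "ln s / (\<alpha> - 1) \<le> 0" using assms(1) by (intro divide_nonneg_neg) auto
  moreover have "renyi2 \<alpha> (x, y) (x, y) = (if s = 0 then \<infinity> else ereal (ln s / (\<alpha> - 1)))"
    unfolding renyi2_def Let_def s_def by (simp only: fst_conv snd_conv powr_1)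
  ultimately show ?thesis using s by simp
qed

lemma D_test_nonneg:
  assumes "X \<in> carrier_mat N N" "Y \<in> carrier_mat N N" "mtrace X = 1" "mtrace Y = 1"
  shows "0 \<le> D_test \<alpha> N X Y"
proof -
  let ?T = "proj_sum N std_basis {}"
  have channel: "test_channel ?T Z = (0, 1)" if "Z \<in> carrier_mat N N" "mtrace Z = 1" for Z
    using mtrace_mult_add_mult_one_minus[OF that(1) proj_sum_carrier, of std_basis "{}"]
      mtrace_mult_proj_sum[OF that(1), of "{}" std_basis] that
    unfolding test_channel_def by simp
  have "renyi2 \<alpha> (test_channel ?T X) (test_channel ?T Y) \<le> D_test \<alpha> N X Y"
    unfolding D_test_def by (rule SUP_upper) (simp add: test_op_proj_sum[OF resolves_identity_std_basis])
  then show ?thesis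
    unfolding channel[OF assms(1,3)] channel[OF assms(2,4)] by (simp add: renyi2_def zero_ereal_def)
qed

lemma D_test_self_le_zero:
  assumes "\<alpha> < 1" "X \<in> carrier_mat N N" "mtrace X = 1"
  shows "D_test \<alpha> N X X \<le> 0"
  unfolding D_test_def
proof (rule SUP_least)
  fix T assume "T \<in> {T. test_op N T}"
  then have "T \<in> carrier_mat N N" unfolding test_op_def psd_mat_def hermitian_mat_def by simp
  then have "fst (test_channel T X) + snd (test_channel T X) = 1"
    using mtrace_mult_add_mult_one_minus[OF assms(2)] assms(2,3)
    unfolding test_channel_def
    by (metis carrier_matD(1) fst_conv one_complex.sel(1) plus_complex.sel(1) snd_conv)
  then show "renyi2 \<alpha> (test_channel T X) (test_channel T X) \<le> 0"
    using renyi2_self_le_zero[OF assms(1)] by (metis prod.collapse)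
qed

lemma D_test_tensor_pow_ge:
  assumes \<alpha>: "0 < \<alpha>" "\<alpha> < 1" and u: "resolves_identity d u"
    and \<rho>: "density_op d \<rho>" and \<sigma>: "density_op d \<sigma>"
    and G: "(\<Sum>l<d. sqrt (outcome_prob d \<rho> u l * outcome_prob d \<sigma> u l)) \<le> G" "0 < G" "G \<le> 1"
  shows "ereal (min \<alpha> (1 - \<alpha>) * - ln G / (1 - \<alpha>) * real n - ln 2 / (1 - \<alpha>))
    \<le> D_test \<alpha> (d ^ n) (tensor_pow \<rho> n) (tensor_pow \<sigma> n)"
proof -
  have d: "0 < d" by (rule density_op_dim_pos[OF \<rho>])
  let ?p = "outcome_prob d \<rho> u" and ?q = "outcome_prob d \<sigma> u"
  let ?P = "prod_dist d ?p n" and ?Q = "prod_dist d ?q n" and ?S = "{..<d ^ n}"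
  define A where "A = {k\<in>?S. ?Q k \<le> ?P k}"
  have A: "A \<subseteq> ?S" unfolding A_def by auto
  have p: "0 \<le> ?p l" and q: "0 \<le> ?q l" for l
    using \<rho> \<sigma> by (auto simp: density_op_def outcome_prob_nonneg)
  have P: "0 \<le> ?P k" and Q: "0 \<le> ?Q k" for k
    using p q by (auto intro: prod_dist_nonneg)
  have "(\<Sum>k\<in>?S. sqrt (?P k * ?Q k)) = (\<Sum>k\<in>?S. prod_dist d (\<lambda>l. sqrt (?p l * ?q l)) n k)"
    by (simp only: prod_dist_sqrt_mult)
  also have "\<dots> = (\<Sum>l<d. sqrt (?p l * ?q l)) ^ n" by (rule sum_prod_dist[OF d])
  also have "\<dots> \<le> G ^ n" using G p q by (intro power_mono sum_nonneg) auto
  finally have errors: "(\<Sum>k\<in>A. ?Q k) \<le> G ^ n" "(\<Sum>k\<in>?S - A. ?P k) \<le> G ^ n"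
    using likelihood_test_errors_le[of ?S ?P ?Q] P Q unfolding A_def by auto
  have "(\<Sum>k\<in>?S. ?P k) = 1" "(\<Sum>k\<in>?S. ?Q k) = 1"
    using sum_prod_dist[OF d] sum_outcome_prob[OF u] \<rho> \<sigma> by simp_all
  then have bounded: "(\<Sum>k\<in>A. ?P k) \<le> 1" "(\<Sum>k\<in>?S - A. ?Q k) \<le> 1"
    using P Q sum_mono2[of ?S A ?P] sum_mono2[of ?S "?S - A" ?Q] by (auto simp: A_def)
  have "ereal (min \<alpha> (1 - \<alpha>) * - ln G / (1 - \<alpha>) * real n - ln 2 / (1 - \<alpha>))
      = ereal ((min \<alpha> (1 - \<alpha>) * - ln (G ^ n) - ln 2) / (1 - \<alpha>))"
    using G(2) by (simp only: ln_realpow diff_divide_distrib) (simp add: mult_ac)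
  also have "\<dots> \<le> renyi2 \<alpha> (\<Sum>k\<in>A. ?P k, \<Sum>k\<in>?S - A. ?P k) (\<Sum>k\<in>A. ?Q k, \<Sum>k\<in>?S - A. ?Q k)"
    using errors bounded G P Q by (intro renyi2_ge_of_errors_le \<alpha>) (auto intro: sum_nonneg power_le_one)
  also have "\<dots> = renyi2 \<alpha> (test_channel (proj_sum (d ^ n) (tensor_basis d u n) A) (tensor_pow \<rho> n))
      (test_channel (proj_sum (d ^ n) (tensor_basis d u n) A) (tensor_pow \<sigma> n))"
    by (simp only: test_channel_proj_sum_tensor_pow[OF d u density_op_hermitian A] \<rho> \<sigma>)
  also have "\<dots> \<le> D_test \<alpha> (d ^ n) (tensor_pow \<rho> n) (tensor_pow \<sigma> n)"
    unfolding D_test_def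
    by (rule SUP_upper) (simp add: test_op_proj_sum[OF resolves_identity_tensor_basis[OF d u] A])
  finally show ?thesis .
qed

section \<open>Regularization\<close>

lemma limsup_div_pos_of_linear_lower_bound:
  fixes f :: "nat \<Rightarrow> ereal"
  assumes c: "0 < c" and f: "\<And>n. ereal (c * real n - C) \<le> f n"
  shows "0 < limsup (\<lambda>n. f n / ereal (real n))"
proof -
  have "\<forall>\<^sub>F n in sequentially. ereal (c / 2) \<le> f n / ereal (real n)"
  proof (rule eventually_sequentiallyI[of "nat \<lceil>2 * C / c\<rceil> + 1"])
    fix n assume n: "nat \<lceil>2 * C / c\<rceil> + 1 \<le> n"
    then have "2 * C / c \<le> real n" by linarith
    then have "2 * C \<le> c * real n" using c by (simp add: divide_le_eq mult.commute)
    moreover have "0 < real n" using n by simp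
    ultimately have "ereal (c / 2) \<le> ereal (c * real n - C) / ereal (real n)"
      by (simp add: field_simps)
    also have "\<dots> \<le> f n / ereal (real n)"
      using \<open>0 < real n\<close> by (intro ereal_divide_right_mono f) simp
    finally show "ereal (c / 2) \<le> f n / ereal (real n)" .
  qed
  then have "ereal (c / 2) \<le> limsup (\<lambda>n. f n / ereal (real n))"
    by (intro le_Limsup) simp_all
  then show ?thesis using c by (simp add: less_le_trans[of 0 "ereal (c / 2)"])
qed

lemma D_test_reg_nonneg:
  assumes "density_op d \<rho>" "density_op d \<sigma>"
  shows "0 \<le> D_test_reg \<alpha> d \<rho> \<sigma>"
proof -
  have "0 \<le> D_test \<alpha> (d ^ n) (tensor_pow \<rho> n) (tensor_pow \<sigma> n)" for n
    using assms by (intro D_test_nonneg tensor_pow_carrier density_op_carrier mtrace_tensor_pow_density_op)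
  then have "0 \<le> D_test \<alpha> (d ^ n) (tensor_pow \<rho> n) (tensor_pow \<sigma> n) / ereal (real n)" if "0 < n" for n
    using ereal_divide_right_mono[of 0 _ "ereal (real n)"] that by simp
  then show ?thesis unfolding D_test_reg_def
    by (intro le_Limsup eventually_sequentiallyI[of 1]) auto
qed

lemma D_test_reg_self:
  assumes "\<alpha> < 1" "density_op d \<rho>"
  shows "D_test_reg \<alpha> d \<rho> \<rho> = 0"
proof -
  have "D_test \<alpha> (d ^ n) (tensor_pow \<rho> n) (tensor_pow \<rho> n) = 0" for n
    using D_test_self_le_zero[OF assms(1)] D_test_nonneg
      tensor_pow_carrier[OF density_op_carrier] mtrace_tensor_pow_density_op assms(2)
    by (meson order.antisym)
  then show ?thesis unfolding D_test_reg_def by (simp add: Limsup_const)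
qed

lemma D_test_reg_pos:
  assumes \<alpha>: "0 < \<alpha>" "\<alpha> < 1" and \<rho>: "density_op d \<rho>" and \<sigma>: "density_op d \<sigma>" and "\<rho> \<noteq> \<sigma>"
  shows "0 < D_test_reg \<alpha> d \<rho> \<sigma>"
proof -
  obtain u l0 where u: "resolves_identity d u" and "l0 < d"
    and "qform d \<rho> (u l0) \<noteq> qform d \<sigma> (u l0)"
    using exists_basis_qform_ne density_op_hermitian assms by metis
  then have l0: "outcome_prob d \<rho> u l0 \<noteq> outcome_prob d \<sigma> u l0"
    using qform_eq_outcome_prob density_op_hermitian \<rho> \<sigma> by metis
  define G where "G = max (\<Sum>l<d. sqrt (outcome_prob d \<rho> u l * outcome_prob d \<sigma> u l)) (1 / 2)"
  have "(\<Sum>l<d. sqrt (outcome_prob d \<rho> u l * outcome_prob d \<sigma> u l)) < 1"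
    using \<rho> \<sigma> \<open>l0 < d\<close> l0 sum_outcome_prob[OF u]
    by (intro sum_sqrt_mult_less_one) (auto simp: density_op_def outcome_prob_nonneg)
  then have G: "0 < G" "G < 1" by (auto simp: G_def)
  have "0 < min \<alpha> (1 - \<alpha>) * - ln G / (1 - \<alpha>)" using \<alpha> G by (intro divide_pos_pos mult_pos_pos) auto
  moreover have "ereal (min \<alpha> (1 - \<alpha>) * - ln G / (1 - \<alpha>) * real n - ln 2 / (1 - \<alpha>))
      \<le> D_test \<alpha> (d ^ n) (tensor_pow \<rho> n) (tensor_pow \<sigma> n)" for n
    using G by (intro D_test_tensor_pow_ge[OF \<alpha> u \<rho> \<sigma>]) (auto simp: G_def)
  ultimately show ?thesis
    unfolding D_test_reg_def by (rule limsup_div_pos_of_linear_lower_bound)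
qed

theorem mainTheorem11:
  fixes \<alpha> :: real and d :: nat and \<rho> \<sigma> :: "complex mat"
  assumes "0 < \<alpha>" and "\<alpha> < 1"
    and "density_op d \<rho>" and "density_op d \<sigma>"
  shows "0 \<le> D_test_reg \<alpha> d \<rho> \<sigma> \<and> (D_test_reg \<alpha> d \<rho> \<sigma> = 0 \<longleftrightarrow> \<rho> = \<sigma>)"
proof (intro conjI iffI)
  show "0 \<le> D_test_reg \<alpha> d \<rho> \<sigma>" by (rule D_test_reg_nonneg[OF assms(3,4)])
  show "D_test_reg \<alpha> d \<rho> \<sigma> = 0" if "\<rho> = \<sigma>"
    using D_test_reg_self[OF assms(2,3)] that by simp
  show "\<rho> = \<sigma>" if "D_test_reg \<alpha> d \<rho> \<sigma> = 0"
    using D_test_reg_pos[OF assms] that by force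
qed

end
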